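(* Let $G$ be any graph of order $n$ and let $H$ be any graph with root vertex $v$. Then $$n\gamma_{oir2}(H)-\alpha(G)\leq \gamma_{oir2}(G\circ_v H)\leq n\gamma_{oir2}(H)+\beta(G).$$
   Context: All graphs are finite and simple. $\alpha(F)$ is the independence number and $\beta(F)=|V(F)|-\alpha(F)$ the vertex cover number of a graph $F$. For a graph $G$, a function $f:V(G)\to\mathcal{P}(\{1,2\})$ is an outer-independent 2-rainbow dominating function (OI2RD function) if every vertex $v$ with $f(v)=\emptyset$ satisfies $\bigcup_{u\in N(v)}f(u)=\{1,2\}$ and the set $\{v: f(v)=\emptyset\}$ is independent. The weight of $f$ is $\sum_{v}|f(v)|$ and $\gamma_{oir2}(G)$ is the minimum weight of an OI2RD function of $G$. For a graph $G$ with $V(G)=\{g_1,\dots,g_n\}$ and a graph $H$ with a distinguished vertex (root) $v$, the rooted product $G\circ_v H$ has vertex set $V(G)\times V(H)$ and edge set $\bigcup_{i=1}^n\{(g_i,h)(g_i,h') : hh'\in E(H)\}\cup\{(g_i,v)(g_j,v): g_ig_j\in E(G)\}$. *)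

theory Defs
  imports Main
begin

definition simple_graph :: "'a set \<Rightarrow> 'a set set \<Rightarrow> bool" where
  "simple_graph V E \<longleftrightarrow> finite V \<and>
     (\<forall>e\<in>E. \<exists>u w. u \<in> V \<and> w \<in> V \<and> u \<noteq> w \<and> e = {u, w})"

definition nbhd :: "'a set \<Rightarrow> 'a set set \<Rightarrow> 'a \<Rightarrow> 'a set" where
  "nbhd V E x = {u \<in> V. {u, x} \<in> E}"

definition independent :: "'a set \<Rightarrow> 'a set set \<Rightarrow> 'a set \<Rightarrow> bool" where
  "independent V E S \<longleftrightarrow> S \<subseteq> V \<and> (\<forall>u\<in>S. \<forall>w\<in>S. {u, w} \<notin> E)"

definition alpha :: "'a set \<Rightarrow> 'a set set \<Rightarrow> nat" where
  "alpha V E = Max {card S | S. independent V E S}"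

definition beta :: "'a set \<Rightarrow> 'a set set \<Rightarrow> nat" where
  "beta V E = card V - alpha V E"

text \<open>Outer-independent 2-rainbow dominating functions (only values on V matter).\<close>
definition oi2rd :: "'a set \<Rightarrow> 'a set set \<Rightarrow> ('a \<Rightarrow> nat set) \<Rightarrow> bool" where
  "oi2rd V E f \<longleftrightarrow>
     (\<forall>x\<in>V. f x \<subseteq> {1, 2}) \<and>
     (\<forall>x\<in>V. f x = {} \<longrightarrow> (\<Union>u\<in>nbhd V E x. f u) = {1, 2}) \<and>
     independent V E {x \<in> V. f x = {}}"

definition weight :: "'a set \<Rightarrow> ('a \<Rightarrow> nat set) \<Rightarrow> nat" where
  "weight V f = (\<Sum>x\<in>V. card (f x))"

definition gamma_oir2 :: "'a set \<Rightarrow> 'a set set \<Rightarrow> nat" where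
  "gamma_oir2 V E = (LEAST k. \<exists>f. oi2rd V E f \<and> weight V f = k)"

definition rp_vertices :: "'a set \<Rightarrow> 'b set \<Rightarrow> ('a \<times> 'b) set" where
  "rp_vertices VG VH = VG \<times> VH"

definition rp_edges :: "'a set \<Rightarrow> 'a set set \<Rightarrow> 'b set \<Rightarrow> 'b set set \<Rightarrow> 'b
     \<Rightarrow> ('a \<times> 'b) set set" where
  "rp_edges VG EG VH EH r =
     {{(g, h), (g, h')} | g h h'. g \<in> VG \<and> {h, h'} \<in> EH} \<union>
     {{(g, r), (g', r)} | g g'. {g, g'} \<in> EG}"

end

theory Submission
  imports Defs
begin

text \<open>Lower bound: restricting an optimal function F of the rooted product to the copy of H
  at g gives an OI2RD function of H once the root is relabelled with {1} where F vanishes;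
  these g form an independent set of G because the zeros of F are independent, so the
  relabelling costs at most \<alpha>(G). Upper bound: copy an optimal function f of H into every
  copy of H and, if f vanishes at the root, relabel the root with {1} outside a maximum
  independent set of G; this costs at most \<beta>(G).\<close>

lemma oi2rd_const_1: "oi2rd V E (\<lambda>_. {1})"
  unfolding oi2rd_def independent_def by auto

lemma oi2rdI:
  assumes "\<And>x. x \<in> V \<Longrightarrow> f x \<subseteq> {1, 2}"
    and "\<And>x. x \<in> V \<Longrightarrow> f x = {} \<Longrightarrow> {1, 2} \<subseteq> (\<Union>u\<in>nbhd V E x. f u)"
    and "\<And>u w. u \<in> V \<Longrightarrow> f u = {} \<Longrightarrow> w \<in> V \<Longrightarrow> f w = {} \<Longrightarrow> {u, w} \<notin> E"
  shows "oi2rd V E f"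
proof -
  have "(\<Union>u\<in>nbhd V E x. f u) \<subseteq> {1, 2}" for x
    using assms(1) by (auto simp: nbhd_def)
  then have "(\<Union>u\<in>nbhd V E x. f u) = {1, 2}" if "x \<in> V" "f x = {}" for x
    using assms(2)[OF that] by (rule subset_antisym)
  then show ?thesis
    using assms(1,3) unfolding oi2rd_def independent_def by auto
qed

lemma oi2rd_subset: "oi2rd V E f \<Longrightarrow> x \<in> V \<Longrightarrow> f x \<subseteq> {1, 2}"
  by (simp add: oi2rd_def)

lemma oi2rd_rainbow:
  "oi2rd V E f \<Longrightarrow> x \<in> V \<Longrightarrow> f x = {} \<Longrightarrow> (\<Union>u\<in>nbhd V E x. f u) = {1, 2}"
  by (simp add: oi2rd_def)

lemma oi2rd_zeros_nonadjacent:
  "oi2rd V E f \<Longrightarrow> u \<in> V \<Longrightarrow> f u = {} \<Longrightarrow> w \<in> V \<Longrightarrow> f w = {} \<Longrightarrow> {u, w} \<notin> E"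
  by (simp add: oi2rd_def independent_def)

lemma gamma_oir2_attained:
  assumes "finite V"
  shows "\<exists>f. oi2rd V E f \<and> weight V f = gamma_oir2 V E"
proof -
  have "\<exists>k f. oi2rd V E f \<and> weight V f = k"
    using oi2rd_const_1 by blast
  then show ?thesis
    unfolding gamma_oir2_def by (rule LeastI_ex)
qed

lemma gamma_oir2_le_weight:
  assumes "oi2rd V E f"
  shows "gamma_oir2 V E \<le> weight V f"
  unfolding gamma_oir2_def by (rule Least_le) (use assms in blast)

lemma finite_independent_cards:
  assumes "finite V"
  shows "finite {card S | S. independent V E S}"
proof (rule finite_subset[of _ "{0..card V}"])
  show "{card S | S. independent V E S} \<subseteq> {0..card V}"
    using assms by (auto simp: independent_def intro: card_mono)
qed simp

lemma alpha_attained: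
  assumes "finite V"
  shows "\<exists>S. independent V E S \<and> card S = alpha V E"
proof -
  have "{card S | S. independent V E S} \<noteq> {}"
    unfolding independent_def by auto
  then have "alpha V E \<in> {card S | S. independent V E S}"
    unfolding alpha_def by (rule Max_in[OF finite_independent_cards[OF assms]])
  then show ?thesis
    by auto
qed

lemma card_le_alpha:
  assumes "finite V" and "independent V E S"
  shows "card S \<le> alpha V E"
  unfolding alpha_def
  by (rule Max_ge[OF finite_independent_cards[OF assms(1)]]) (use assms(2) in blast)

lemma beta_eq_card_Diff:
  assumes "finite V" and "independent V E S" and "card S = alpha V E"
  shows "beta V E = card (V - S)"
proof -
  have "S \<subseteq> V"
    using assms(2) by (simp add: independent_def)
  then show ?thesis
    using assms(1,3) by (simp add: beta_def card_Diff_subset finite_subset)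
qed

lemma rp_edges_doubleton_iff:
  "{(g, h), (g', h')} \<in> rp_edges VG EG VH EH r \<longleftrightarrow>
     (g = g' \<and> g \<in> VG \<and> {h, h'} \<in> EH) \<or> (h = r \<and> h' = r \<and> {g, g'} \<in> EG)"
  unfolding rp_edges_def by (auto simp: doubleton_eq_iff insert_commute)

lemma nbhd_rp:
  assumes "g \<in> VG" and "r \<in> VH"
  shows "nbhd (rp_vertices VG VH) (rp_edges VG EG VH EH r) (g, h) =
           {g} \<times> nbhd VH EH h \<union> (if h = r then nbhd VG EG g \<times> {r} else {})"
  using assms
  by (auto simp: nbhd_def rp_vertices_def rp_edges_doubleton_iff insert_commute)

lemma weight_rp_vertices:
  "weight (rp_vertices VG VH) F = (\<Sum>g\<in>VG. weight VH (\<lambda>h. F (g, h)))"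
  unfolding weight_def rp_vertices_def by (simp add: sum.cartesian_product)

definition fill_at :: "'b \<Rightarrow> ('b \<Rightarrow> nat set) \<Rightarrow> 'b \<Rightarrow> nat set" where
  "fill_at r f = (if f r = {} then f(r := {1}) else f)"

lemma fill_at_eq_empty_iff: "fill_at r f h = {} \<longleftrightarrow> f h = {} \<and> h \<noteq> r"
  by (auto simp: fill_at_def)

lemma subset_fill_at: "f h \<subseteq> fill_at r f h"
  by (auto simp: fill_at_def)

lemma fill_at_subset: "fill_at r f h \<subseteq> f h \<union> {1}"
  by (auto simp: fill_at_def)

lemma weight_fill_at:
  assumes "finite V" and "r \<in> V"
  shows "weight V (fill_at r f) = weight V f + of_bool (f r = {})"
proof (cases "f r = {}")
  case True
  have "weight V (f(r := {1})) = weight V f + 1"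
    using assms True by (simp add: weight_def sum.remove)
  then show ?thesis
    using True by (simp add: fill_at_def)
qed (simp add: fill_at_def)

lemma oi2rd_fiber:
  assumes F: "oi2rd (rp_vertices VG VH) (rp_edges VG EG VH EH r) F"
    and g: "g \<in> VG" and r: "r \<in> VH"
  shows "oi2rd VH EH (fill_at r (\<lambda>h. F (g, h)))"
    (is "oi2rd VH EH ?f")
proof (rule oi2rdI)
  fix h assume h: "h \<in> VH"
  then have "(g, h) \<in> rp_vertices VG VH"
    using g by (simp add: rp_vertices_def)
  then show "?f h \<subseteq> {1, 2}"
    using oi2rd_subset[OF F] fill_at_subset[of r "\<lambda>h. F (g, h)" h] by auto
  assume "?f h = {}"
  then have "F (g, h) = {}" and "h \<noteq> r"
    by (simp_all add: fill_at_eq_empty_iff)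
  moreover have "F ` ({g} \<times> nbhd VH EH h) = (\<lambda>h'. F (g, h')) ` nbhd VH EH h"
    by auto
  ultimately have "{1, 2} = (\<Union>h'\<in>nbhd VH EH h. F (g, h'))"
    using oi2rd_rainbow[OF F \<open>(g, h) \<in> rp_vertices VG VH\<close>] nbhd_rp[OF g r] by simp
  also have "\<dots> \<subseteq> (\<Union>h'\<in>nbhd VH EH h. ?f h')"
    by (intro UN_mono subset_fill_at order_refl)
  finally show "{1, 2} \<subseteq> (\<Union>h'\<in>nbhd VH EH h. ?f h')" .
next
  fix u w assume "u \<in> VH" "?f u = {}" "w \<in> VH" "?f w = {}"
  then have "{(g, u), (g, w)} \<notin> rp_edges VG EG VH EH r"
    using g by (intro oi2rd_zeros_nonadjacent[OF F])
      (simp_all add: rp_vertices_def fill_at_eq_empty_iff)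
  then show "{u, w} \<notin> EH"
    using g by (simp add: rp_edges_doubleton_iff)
qed

lemma independent_root_layer:
  assumes F: "oi2rd (rp_vertices VG VH) (rp_edges VG EG VH EH r) F" and r: "r \<in> VH"
  shows "independent VG EG {g \<in> VG. F (g, r) = {}}"
proof -
  have "{g, g'} \<notin> EG" if "g \<in> VG" "F (g, r) = {}" "g' \<in> VG" "F (g', r) = {}" for g g'
  proof -
    have "{(g, r), (g', r)} \<notin> rp_edges VG EG VH EH r"
      using that r by (intro oi2rd_zeros_nonadjacent[OF F]) (simp_all add: rp_vertices_def)
    then show ?thesis
      by (simp add: rp_edges_doubleton_iff)
  qed
  then show ?thesis
    unfolding independent_def by auto
qed

lemma oi2rd_lift:
  assumes f: "oi2rd VH EH f" and S: "independent VG EG S" and r: "r \<in> VH"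
  shows "oi2rd (rp_vertices VG VH) (rp_edges VG EG VH EH r)
           (\<lambda>(g, h). if g \<in> S then f h else fill_at r f h)"
    (is "oi2rd ?V ?E ?F")
proof (rule oi2rdI)
  have f_le_F: "f h \<subseteq> ?F (g, h)" for g h
    using subset_fill_at[of f] by auto
  fix x assume "x \<in> ?V"
  then obtain g h where x: "x = (g, h)" and g: "g \<in> VG" and h: "h \<in> VH"
    by (auto simp: rp_vertices_def)
  show "?F x \<subseteq> {1, 2}"
    using x oi2rd_subset[OF f h] fill_at_subset[of r f h] by auto
  assume "?F x = {}"
  then have "f h = {}"
    using f_le_F[of h g] x by blast
  then have "(\<Union>h'\<in>nbhd VH EH h. f h') = {1, 2}"
    by (rule oi2rd_rainbow[OF f h])
  moreover have "(\<Union>h'\<in>nbhd VH EH h. f h') \<subseteq> (\<Union>u\<in>nbhd ?V ?E x. ?F u)"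
    using f_le_F nbhd_rp[OF g r, of EG EH h] x by blast
  ultimately show "{1, 2} \<subseteq> (\<Union>u\<in>nbhd ?V ?E x. ?F u)"
    by simp
next
  fix u w assume u: "u \<in> ?V" "?F u = {}" and w: "w \<in> ?V" "?F w = {}"
  obtain g h g' h' where uw: "u = (g, h)" "w = (g', h')"
    by (cases u, cases w)
  have zeros: "f h = {}" "f h' = {}" "h = r \<longrightarrow> g \<in> S" "h' = r \<longrightarrow> g' \<in> S"
    using u w uw by (auto split: if_splits simp: fill_at_eq_empty_iff)
  have "{h, h'} \<notin> EH"
    using u w uw zeros by (intro oi2rd_zeros_nonadjacent[OF f]) (simp_all add: rp_vertices_def)
  show "{u, w} \<notin> ?E"
  proof
    assume "{u, w} \<in> ?E"
    then have "h = r \<and> h' = r \<and> {g, g'} \<in> EG"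
      using \<open>{h, h'} \<notin> EH\<close> uw by (simp add: rp_edges_doubleton_iff)
    then show False
      using S zeros unfolding independent_def by blast
  qed
qed

lemma gamma_oir2_rp_lower:
  assumes "finite VG" and "finite VH" and r: "r \<in> VH"
  shows "card VG * gamma_oir2 VH EH
           \<le> gamma_oir2 (rp_vertices VG VH) (rp_edges VG EG VH EH r) + alpha VG EG"
proof -
  have "finite (rp_vertices VG VH)"
    using assms by (simp add: rp_vertices_def)
  then obtain F where F: "oi2rd (rp_vertices VG VH) (rp_edges VG EG VH EH r) F"
    and wF: "weight (rp_vertices VG VH) F
               = gamma_oir2 (rp_vertices VG VH) (rp_edges VG EG VH EH r)"
    using gamma_oir2_attained by blast
  define T where "T = {g \<in> VG. F (g, r) = {}}"
  have "card VG * gamma_oir2 VH EH = (\<Sum>g\<in>VG. gamma_oir2 VH EH)"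
    by simp
  also have "\<dots> \<le> (\<Sum>g\<in>VG. weight VH (fill_at r (\<lambda>h. F (g, h))))"
    using gamma_oir2_le_weight[OF oi2rd_fiber[OF F _ r]] by (intro sum_mono)
  also have "\<dots> = (\<Sum>g\<in>VG. weight VH (\<lambda>h. F (g, h)) + of_bool (F (g, r) = {}))"
    using assms by (simp add: weight_fill_at)
  also have "\<dots> = weight (rp_vertices VG VH) F + card T"
    using assms(1) by (simp add: sum.distrib weight_rp_vertices T_def Int_def)
  also have "card T \<le> alpha VG EG"
    using card_le_alpha[OF assms(1) independent_root_layer[OF F r]] by (simp add: T_def)
  finally show ?thesis
    using wF by simp
qed

lemma gamma_oir2_rp_upper:
  assumes "finite VG" and "finite VH" and r: "r \<in> VH"
  shows "gamma_oir2 (rp_vertices VG VH) (rp_edges VG EG VH EH r)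
           \<le> card VG * gamma_oir2 VH EH + beta VG EG"
proof -
  obtain f where f: "oi2rd VH EH f" and wf: "weight VH f = gamma_oir2 VH EH"
    using gamma_oir2_attained[OF assms(2)] by blast
  obtain S where S: "independent VG EG S" and cS: "card S = alpha VG EG"
    using alpha_attained[OF assms(1)] by blast
  have fiber_weight: "weight VH (\<lambda>h. if g \<in> S then f h else fill_at r f h)
                        \<le> weight VH f + of_bool (g \<notin> S)" for g
    using assms by (cases "g \<in> S") (simp_all add: weight_fill_at)
  have "gamma_oir2 (rp_vertices VG VH) (rp_edges VG EG VH EH r)
          \<le> weight (rp_vertices VG VH) (\<lambda>(g, h). if g \<in> S then f h else fill_at r f h)"
    by (rule gamma_oir2_le_weight[OF oi2rd_lift[OF f S r]])
  also have "\<dots> \<le> (\<Sum>g\<in>VG. weight VH f + of_bool (g \<notin> S))"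
    unfolding weight_rp_vertices using fiber_weight by (intro sum_mono) simp
  also have "\<dots> = card VG * weight VH f + card (VG - S)"
    using assms(1) by (simp add: sum.distrib Diff_eq Compl_eq)
  finally show ?thesis
    using wf beta_eq_card_Diff[OF assms(1) S cS] by simp
qed

theorem mainTheorem6:
  fixes VG :: "'a set" and EG :: "'a set set"
    and VH :: "'b set" and EH :: "'b set set" and r :: 'b and n :: nat
  assumes "simple_graph VG EG" and "simple_graph VH EH" and "r \<in> VH"
    and "n = card VG"
  shows "int n * int (gamma_oir2 VH EH) - int (alpha VG EG)
           \<le> int (gamma_oir2 (rp_vertices VG VH) (rp_edges VG EG VH EH r))
       \<and> int (gamma_oir2 (rp_vertices VG VH) (rp_edges VG EG VH EH r))
           \<le> int n * int (gamma_oir2 VH EH) + int (beta VG EG)"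
proof -
  have fin: "finite VG" "finite VH"
    using assms(1,2) by (simp_all add: simple_graph_def)
  have "n * gamma_oir2 VH EH
          \<le> gamma_oir2 (rp_vertices VG VH) (rp_edges VG EG VH EH r) + alpha VG EG"
    using gamma_oir2_rp_lower[OF fin assms(3)] assms(4) by simp
  moreover have "gamma_oir2 (rp_vertices VG VH) (rp_edges VG EG VH EH r)
                   \<le> n * gamma_oir2 VH EH + beta VG EG"
    using gamma_oir2_rp_upper[OF fin assms(3)] assms(4) by simp
  ultimately have "int (n * gamma_oir2 VH EH)
          \<le> int (gamma_oir2 (rp_vertices VG VH) (rp_edges VG EG VH EH r) + alpha VG EG)"
    and "int (gamma_oir2 (rp_vertices VG VH) (rp_edges VG EG VH EH r))
          \<le> int (n * gamma_oir2 VH EH + beta VG EG)"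
    by (simp_all only: of_nat_le_iff)
  then show ?thesis
    unfolding of_nat_mult of_nat_add by linarith
qed

end
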